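(* Let $B(t,x)=\sum_T t^{\mathrm{da}(T)}x^{|T|}$, the sum over all binary trees $T$ (including the empty tree), where $|T|$ is the number of nodes. Then $$B(t,x)=1+\frac{1-\sqrt{1+4x\left(x-\frac{1-\sqrt{1-4tx}}{t}\right)}}{2x}.$$
   Context: A binary tree is a rooted tree in which each node has at most two children, distinguished as left child and right child. The address of a node is the word over $\{L,R\}$ recording the sequence of left/right children along the path from the root to the node (the root has the empty address). The complement of an address swaps $L$ and $R$. Two nodes are mirror images if their addresses are complements of each other (so the root is its own mirror image). The degree of asymmetry $\mathrm{da}(T)$ is the number of nodes of $T$ that are not mirror images of any node of $T$. *)

theory Defs
  imports "HOL-Analysis.Analysis"
begin

datatype btree = E | N btree btree

text \<open>Addresses of the nodes of a tree, as words over {L,R};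
L is encoded as False and R as True. The root has address [].\<close>
fun addrs :: "btree \<Rightarrow> bool list set" where
  "addrs E = {}"
| "addrs (N l r) = insert [] (Cons False ` addrs l \<union> Cons True ` addrs r)"

definition compl_addr :: "bool list \<Rightarrow> bool list" where
  "compl_addr a = map Not a"

definition nnodes :: "btree \<Rightarrow> nat" where
  "nnodes T = card (addrs T)"

definition da :: "btree \<Rightarrow> nat" where
  "da T = card {a \<in> addrs T. compl_addr a \<notin> addrs T}"

end

theory Submission
  imports Defs
begin

(* In N l r the mirror image of the node False # w of l is True # compl_addr w, i.e. it sits at
   the mirror position of w inside r.  So da (N l r) = u(l, r) + u(r, l), where
   u(a, b) = unmatched a b counts the nodes of a whose mirror position is not a node of b, and
   B = 1 + x F for the pair series F = sum over (a, b) of t^(u(a, b) + u(b, a)) x^(|a| + |b|).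
   If a component of the pair is empty, every node of the other one is unmatched, which gives the
   Catalan series G(t x), resp. G(t x) - 1; otherwise u(N a1 a2, N b1 b2) = u(a1, b2) + u(a2, b1)
   splits the weight into the weights of (a1, b2) and (a2, b1).  Hence F = 2 G(t x) - 1 + x^2 F^2
   and G(y) = 1 + y G(y)^2, and for small |x| the bounds |G| <= 2 and |F| <= 4 select the minus
   sign in both quadratic formulas. *)

lemma finite_addrs [simp]: "finite (addrs T)"
  by (induction T) auto

lemma compl_addr_Nil [simp]: "compl_addr [] = []"
  and compl_addr_Cons [simp]: "compl_addr (b # w) = (\<not> b) # compl_addr w"
  by (simp_all add: compl_addr_def)

lemma card_Cons_image_Un:
  assumes "finite A" "finite B"
  shows "card (Cons False ` A \<union> Cons True ` B) = card A + card B"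
  using assms by (subst card_Un_disjoint) (auto simp: card_image)

lemma nnodes_E [simp]: "nnodes E = 0"
  by (simp add: nnodes_def)

lemma nnodes_N [simp]: "nnodes (N l r) = Suc (nnodes l + nnodes r)"
  by (auto simp: nnodes_def card_insert_if card_Cons_image_Un)

definition unmatched :: "btree \<Rightarrow> btree \<Rightarrow> nat" where
  "unmatched a b = card {w \<in> addrs a. compl_addr w \<notin> addrs b}"

lemma da_eq_unmatched: "da T = unmatched T T"
  by (simp add: da_def unmatched_def)

lemma unmatched_le_nnodes: "unmatched a b \<le> nnodes a"
  unfolding unmatched_def nnodes_def by (rule card_mono) auto

lemma unmatched_E_left [simp]: "unmatched E b = 0"
  by (simp add: unmatched_def)

lemma unmatched_E_right [simp]: "unmatched a E = nnodes a"
  by (simp add: unmatched_def nnodes_def)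

lemma unmatched_N_N: "unmatched (N a1 a2) (N b1 b2) = unmatched a1 b2 + unmatched a2 b1"
proof -
  have "{w \<in> addrs (N a1 a2). compl_addr w \<notin> addrs (N b1 b2)} =
      Cons False ` {w \<in> addrs a1. compl_addr w \<notin> addrs b2} \<union>
      Cons True ` {w \<in> addrs a2. compl_addr w \<notin> addrs b1}"
    by auto
  then show ?thesis
    by (simp add: unmatched_def card_Cons_image_Un)
qed

lemma da_E [simp]: "da E = 0"
  by (simp add: da_eq_unmatched)

lemma da_N: "da (N l r) = unmatched l r + unmatched r l"
  by (simp add: da_eq_unmatched unmatched_N_N)

lemma has_sum_cartesian_product:
  fixes f :: "'a \<Rightarrow> 'c::{real_normed_div_algebra, banach}"
  assumes f: "(\<lambda>x. norm (f x)) summable_on A" and g: "(\<lambda>y. norm (g y)) summable_on B"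
  shows "((\<lambda>(x, y). f x * g y) has_sum infsum f A * infsum g B) (A \<times> B)"
proof (rule has_sum_SigmaI)
  show "((\<lambda>y. case (x, y) of (x, y) \<Rightarrow> f x * g y) has_sum f x * infsum g B) B" for x
    using has_sum_cmult_right[OF has_sum_infsum[OF abs_summable_summable[OF g]], of "f x"] by simp
  show "((\<lambda>x. f x * infsum g B) has_sum infsum f A * infsum g B) A"
    by (rule has_sum_cmult_left[OF has_sum_infsum[OF abs_summable_summable[OF f]]])
  have "(\<lambda>z. norm ((\<lambda>(x, y). f x * g y) z)) summable_on A \<times> B"
  proof (rule Infinite_Sum.abs_summable_on_Sigma_iff[THEN iffD2], intro conjI ballI)
    show "(\<lambda>y. norm ((\<lambda>(x, y). f x * g y) (x, y))) summable_on B" for x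
      using g by (simp add: norm_mult summable_on_cmult_right)
    have "0 \<le> infsum (\<lambda>y. norm (g y)) B"
      by (simp add: infsum_nonneg)
    then show "(\<lambda>x. norm (\<Sum>\<^sub>\<infinity>y\<in>B. norm ((\<lambda>(x, y). f x * g y) (x, y)))) summable_on A"
      using f by (simp add: norm_mult infsum_cmult_right' abs_mult summable_on_cmult_left)
  qed
  then show "(\<lambda>(x, y). f x * g y) summable_on A \<times> B"
    by (rule abs_summable_summable)
qed

abbreviation node :: "btree \<times> btree \<Rightarrow> btree" where
  "node \<equiv> case_prod N"

lemma inj_node: "inj node"
  by (auto simp: inj_def)

lemma insert_E_range_node: "insert E (range node) = UNIV"
proof -
  have "T \<in> insert E (range node)" for T
    by (cases T) auto
  then show ?thesis
    by auto
qed

lemma has_sum_btree_iff: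
  fixes f :: "btree \<Rightarrow> 'a::banach"
  shows "(f has_sum S) UNIV \<longleftrightarrow> ((\<lambda>q. f (node q)) has_sum (S - f E)) UNIV"
proof -
  have E_notin: "E \<notin> range node"
    by auto
  have "(f has_sum S) UNIV \<longleftrightarrow> (f has_sum S) (insert E (range node))"
    by (simp only: insert_E_range_node)
  also have "\<dots> \<longleftrightarrow> (f has_sum (S - f E)) (range node)"
  proof
    assume ins: "(f has_sum S) (insert E (range node))"
    have summable: "f summable_on range node"
      by (rule summable_on_subset_banach[OF has_sum_imp_summable[OF ins]]) auto
    have "(f has_sum (f E + infsum f (range node))) (insert E (range node))"
      using E_notin has_sum_infsum[OF summable] by (rule has_sum_insert)
    with ins have "S = f E + infsum f (range node)"
      by (rule has_sum_unique)
    then show "(f has_sum (S - f E)) (range node)"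
      using has_sum_infsum[OF summable] by simp
  next
    assume "(f has_sum (S - f E)) (range node)"
    with E_notin have "(f has_sum (f E + (S - f E))) (insert E (range node))"
      by (rule has_sum_insert)
    then show "(f has_sum S) (insert E (range node))"
      by simp
  qed
  also have "\<dots> \<longleftrightarrow> ((\<lambda>q. f (node q)) has_sum (S - f E)) UNIV"
    by (simp only: has_sum_reindex[OF inj_node] comp_def)
  finally show ?thesis .
qed

fun height :: "btree \<Rightarrow> nat" where
  "height E = 0"
| "height (N l r) = Suc (max (height l) (height r))"

fun trees_height_le :: "nat \<Rightarrow> btree set" where
  "trees_height_le 0 = {E}"
| "trees_height_le (Suc k) = insert E (node ` (trees_height_le k \<times> trees_height_le k))"

lemma finite_trees_height_le: "finite (trees_height_le k)"
  by (induction k) auto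

lemma mem_trees_height_le: "height T \<le> k \<Longrightarrow> T \<in> trees_height_le k"
proof (induction T arbitrary: k)
  case E
  then show ?case by (cases k) auto
next
  case (N l r)
  then show ?case by (cases k) auto
qed

lemma sum_trees_height_le:
  fixes c :: real
  assumes "0 \<le> c" "c \<le> 1/4"
  shows "(\<Sum>T\<in>trees_height_le k. c ^ nnodes T) \<le> 2"
proof (induction k)
  case 0
  then show ?case by simp
next
  case (Suc k)
  define S where "S = (\<Sum>T\<in>trees_height_le k. c ^ nnodes T)"
  have "(\<Sum>T\<in>node ` (trees_height_le k \<times> trees_height_le k). c ^ nnodes T) =
      (\<Sum>q\<in>trees_height_le k \<times> trees_height_le k. c ^ nnodes (node q))"
    by (rule sum.reindex[OF inj_on_subset[OF inj_node], unfolded comp_def]) simp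
  also have "\<dots> = c * S\<^sup>2"
    by (simp add: S_def sum_product sum.cartesian_product sum_distrib_left case_prod_beta
        power_add power2_eq_square mult_ac)
  also have "\<dots> \<le> 1/4 * 2\<^sup>2"
    using Suc assms by (intro mult_mono power_mono) (auto simp: S_def intro: sum_nonneg)
  finally have "(\<Sum>T\<in>node ` (trees_height_le k \<times> trees_height_le k). c ^ nnodes T) \<le> 1"
    by simp
  moreover have "E \<notin> node ` (trees_height_le k \<times> trees_height_le k)"
    by auto
  ultimately show ?case
    by (simp add: finite_trees_height_le)
qed

definition catalan_gf :: "real \<Rightarrow> real" where
  "catalan_gf y = (\<Sum>\<^sub>\<infinity>T. y ^ nnodes T)"

lemma catalan_abs_summable:
  fixes y :: real
  assumes "\<bar>y\<bar> \<le> 1/4"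
  shows "(\<lambda>T. norm (y ^ nnodes T)) summable_on UNIV"
    and "(\<Sum>\<^sub>\<infinity>T. \<bar>y\<bar> ^ nnodes T) \<le> 2"
proof -
  have partial_sums: "(\<Sum>T\<in>F. \<bar>y\<bar> ^ nnodes T) \<le> 2" if "finite F" for F
  proof -
    have "F \<subseteq> trees_height_le (Max (height ` F))"
      using that by (auto intro: mem_trees_height_le)
    then have "(\<Sum>T\<in>F. \<bar>y\<bar> ^ nnodes T) \<le> (\<Sum>T\<in>trees_height_le (Max (height ` F)). \<bar>y\<bar> ^ nnodes T)"
      by (intro sum_mono2 finite_trees_height_le) auto
    also have "\<dots> \<le> 2"
      using assms by (intro sum_trees_height_le) auto
    finally show ?thesis .
  qed
  show abs: "(\<lambda>T. norm (y ^ nnodes T)) summable_on UNIV"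
  proof (rule nonneg_bdd_above_summable_on)
    show "bdd_above (sum (\<lambda>T. norm (y ^ nnodes T)) ` {F. F \<subseteq> UNIV \<and> finite F})"
      by (rule bdd_aboveI2[where M = 2]) (simp add: power_abs partial_sums)
  qed simp
  show "(\<Sum>\<^sub>\<infinity>T. \<bar>y\<bar> ^ nnodes T) \<le> 2"
    using abs by (intro infsum_le_finite_sums partial_sums) (simp_all add: power_abs)
qed

lemma has_sum_catalan_gf:
  fixes y :: real
  assumes "\<bar>y\<bar> \<le> 1/4"
  shows "((\<lambda>T. y ^ nnodes T) has_sum catalan_gf y) UNIV"
  using catalan_abs_summable(1)[OF assms]
  by (simp add: catalan_gf_def abs_summable_summable)

lemma abs_catalan_gf_le:
  fixes y :: real
  assumes "\<bar>y\<bar> \<le> 1/4"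
  shows "\<bar>catalan_gf y\<bar> \<le> 2"
proof -
  have "norm (catalan_gf y) \<le> (\<Sum>\<^sub>\<infinity>T. norm (y ^ nnodes T))"
    unfolding catalan_gf_def by (rule norm_infsum_bound[OF catalan_abs_summable(1)[OF assms]])
  also have "\<dots> \<le> 2"
    using catalan_abs_summable(2)[OF assms] by (simp add: power_abs)
  finally show ?thesis
    by simp
qed

lemma has_sum_catalan_gf_nonempty:
  fixes y :: real
  assumes "\<bar>y\<bar> \<le> 1/4"
  shows "((\<lambda>q. y ^ nnodes (node q)) has_sum catalan_gf y - 1) UNIV"
  using has_sum_catalan_gf[OF assms] by (simp add: has_sum_btree_iff)

lemma has_sum_catalan_gf_squared:
  fixes y :: real
  assumes "\<bar>y\<bar> \<le> 1/4"
  shows "((\<lambda>(l, r). y ^ nnodes l * y ^ nnodes r) has_sum (catalan_gf y)\<^sup>2) UNIV"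
  using has_sum_cartesian_product[OF catalan_abs_summable(1)[OF assms] catalan_abs_summable(1)[OF assms]]
  by (simp add: catalan_gf_def power2_eq_square)

lemma catalan_gf_equation:
  fixes y :: real
  assumes "\<bar>y\<bar> \<le> 1/4"
  shows "catalan_gf y = 1 + y * (catalan_gf y)\<^sup>2"
proof -
  note has_sum_catalan_gf_squared[OF assms]
  moreover have "(\<lambda>q. y ^ nnodes (node q)) = (\<lambda>q. y * (\<lambda>(l, r). y ^ nnodes l * y ^ nnodes r) q)"
    by (auto simp: power_add)
  ultimately have "((\<lambda>q. y ^ nnodes (node q)) has_sum y * (catalan_gf y)\<^sup>2) UNIV"
    by (simp add: has_sum_cmult_right)
  with has_sum_catalan_gf_nonempty[OF assms] have "catalan_gf y - 1 = y * (catalan_gf y)\<^sup>2"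
    by (rule has_sum_unique)
  then show ?thesis
    by simp
qed

lemma abs_le_one_quarter:
  fixes t x :: real
  assumes "max 1 \<bar>t\<bar> * \<bar>x\<bar> \<le> 1/4"
  shows "\<bar>x\<bar> \<le> 1/4" and "\<bar>t * x\<bar> \<le> 1/4"
proof -
  have "\<bar>x\<bar> \<le> max 1 \<bar>t\<bar> * \<bar>x\<bar>" and "\<bar>t\<bar> * \<bar>x\<bar> \<le> max 1 \<bar>t\<bar> * \<bar>x\<bar>"
    using mult_right_mono[of 1 "max 1 \<bar>t\<bar>" "\<bar>x\<bar>"] mult_right_mono[of "\<bar>t\<bar>" "max 1 \<bar>t\<bar>" "\<bar>x\<bar>"]
    by simp_all
  then show "\<bar>x\<bar> \<le> 1/4" and "\<bar>t * x\<bar> \<le> 1/4"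
    using assms by (simp_all add: abs_mult)
qed

definition pair_weight :: "real \<Rightarrow> real \<Rightarrow> btree \<times> btree \<Rightarrow> real" where
  "pair_weight t x = (\<lambda>(a, b). t ^ (unmatched a b + unmatched b a) * x ^ (nnodes a + nnodes b))"

definition pair_gf :: "real \<Rightarrow> real \<Rightarrow> real" where
  "pair_gf t x = (\<Sum>\<^sub>\<infinity>p. pair_weight t x p)"

lemma pair_weight_E_left: "pair_weight t x (E, b) = (t * x) ^ nnodes b"
  by (simp add: pair_weight_def power_mult_distrib)

lemma pair_weight_E_right: "pair_weight t x (a, E) = (t * x) ^ nnodes a"
  by (simp add: pair_weight_def power_mult_distrib)

lemma pair_weight_N_N:
  "pair_weight t x (N a1 a2, N b1 b2) = x\<^sup>2 * (pair_weight t x (a1, b2) * pair_weight t x (a2, b1))"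
  by (simp add: pair_weight_def unmatched_N_N power_add power2_eq_square mult_ac)

lemma abs_pair_weight_le:
  "\<bar>pair_weight t x (a, b)\<bar> \<le> (max 1 \<bar>t\<bar> * \<bar>x\<bar>) ^ nnodes a * (max 1 \<bar>t\<bar> * \<bar>x\<bar>) ^ nnodes b"
proof -
  let ?k = "unmatched a b + unmatched b a" and ?n = "nnodes a + nnodes b"
  have "?k \<le> ?n"
    using unmatched_le_nnodes[of a b] unmatched_le_nnodes[of b a] by simp
  have "\<bar>t\<bar> ^ ?k \<le> max 1 \<bar>t\<bar> ^ ?k"
    by (rule power_mono) auto
  also have "\<dots> \<le> max 1 \<bar>t\<bar> ^ ?n"
    using \<open>?k \<le> ?n\<close> by (rule power_increasing) simp
  finally have "\<bar>t\<bar> ^ ?k * \<bar>x\<bar> ^ ?n \<le> max 1 \<bar>t\<bar> ^ ?n * \<bar>x\<bar> ^ ?n"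
    by (rule mult_right_mono) simp
  moreover have "\<bar>pair_weight t x (a, b)\<bar> = \<bar>t\<bar> ^ ?k * \<bar>x\<bar> ^ ?n"
    by (simp add: pair_weight_def abs_mult power_abs)
  moreover have "max 1 \<bar>t\<bar> ^ ?n * \<bar>x\<bar> ^ ?n =
      (max 1 \<bar>t\<bar> * \<bar>x\<bar>) ^ nnodes a * (max 1 \<bar>t\<bar> * \<bar>x\<bar>) ^ nnodes b"
    by (simp only: power_mult_distrib power_add mult_ac)
  ultimately show ?thesis
    by simp
qed

lemma pair_weight_abs_summable:
  assumes "max 1 \<bar>t\<bar> * \<bar>x\<bar> \<le> 1/4"
  shows "(\<lambda>p. norm (pair_weight t x p)) summable_on UNIV"
proof (rule summable_on_comparison_test)
  show "(\<lambda>(a, b). (max 1 \<bar>t\<bar> * \<bar>x\<bar>) ^ nnodes a * (max 1 \<bar>t\<bar> * \<bar>x\<bar>) ^ nnodes b) summable_on UNIV"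
    by (rule has_sum_imp_summable[OF has_sum_catalan_gf_squared]) (use assms in simp)
  show "norm (pair_weight t x p) \<le>
      (\<lambda>(a, b). (max 1 \<bar>t\<bar> * \<bar>x\<bar>) ^ nnodes a * (max 1 \<bar>t\<bar> * \<bar>x\<bar>) ^ nnodes b) p" for p
    by (cases p) (simp only: real_norm_def abs_pair_weight_le case_prod_conv)
qed simp

lemma abs_pair_gf_le:
  assumes "max 1 \<bar>t\<bar> * \<bar>x\<bar> \<le> 1/4"
  shows "\<bar>pair_gf t x\<bar> \<le> 4"
proof -
  define c where "c = max 1 \<bar>t\<bar> * \<bar>x\<bar>"
  define m where "m = (\<lambda>(a, b). c ^ nnodes a * c ^ nnodes b)"
  have c: "\<bar>c\<bar> \<le> 1/4"
    using assms by (simp add: c_def)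
  have m: "(m has_sum (catalan_gf c)\<^sup>2) UNIV"
    unfolding m_def using c by (rule has_sum_catalan_gf_squared)
  have "norm (pair_gf t x) \<le> (\<Sum>\<^sub>\<infinity>p. norm (pair_weight t x p))"
    unfolding pair_gf_def by (rule norm_infsum_bound[OF pair_weight_abs_summable[OF assms]])
  also have "\<dots> \<le> infsum m UNIV"
  proof (rule infsum_mono[OF pair_weight_abs_summable[OF assms] has_sum_imp_summable[OF m]])
    show "norm (pair_weight t x p) \<le> m p" for p
      by (cases p) (simp only: c_def m_def real_norm_def abs_pair_weight_le case_prod_conv)
  qed
  also have "\<dots> = (catalan_gf c)\<^sup>2"
    using m by (rule infsumI)
  also have "\<dots> \<le> 2\<^sup>2"
    using abs_catalan_gf_le[OF c] by (metis abs_ge_zero power2_abs power_mono)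
  finally show ?thesis
    by simp
qed

lemma has_sum_btree_pairsI:
  fixes f :: "btree \<times> btree \<Rightarrow> 'a::topological_comm_monoid_add"
  assumes empty_left: "((\<lambda>b. f (E, b)) has_sum S1) UNIV"
    and empty_right: "((\<lambda>a. f (node a, E)) has_sum S2) UNIV"
    and nonempty: "((\<lambda>((a1, b2), (a2, b1)). f (N a1 a2, N b1 b2)) has_sum S3) UNIV"
    \<comment> \<open>indexed so that the two inner pairs are the ones whose weights multiply (pair_weight_N_N)\<close>
  shows "(f has_sum S1 + S2 + S3) UNIV"
proof -
  define split_pair :: "(btree \<times> btree) \<times> (btree \<times> btree) \<Rightarrow> btree \<times> btree" where
    "split_pair = (\<lambda>((a1, b2), (a2, b1)). (N a1 a2, N b1 b2))"
  have "(f has_sum S1) (range (Pair E))"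
    using empty_left by (subst has_sum_reindex) (auto simp: inj_def comp_def)
  moreover have "(f has_sum S2) (range (\<lambda>a. (node a, E)))"
    using empty_right by (subst has_sum_reindex) (auto simp: inj_def comp_def)
  moreover have "(f has_sum S3) (range split_pair)"
  proof -
    have "f \<circ> split_pair = (\<lambda>((a1, b2), (a2, b1)). f (N a1 a2, N b1 b2))"
      by (auto simp: split_pair_def)
    with nonempty have "((f \<circ> split_pair) has_sum S3) UNIV"
      by (simp only:)
    moreover have "inj split_pair"
      by (auto simp: inj_def split_pair_def)
    ultimately show ?thesis
      by (simp add: has_sum_reindex)
  qed
  ultimately have "(f has_sum S1 + S2 + S3) (range (Pair E) \<union> range (\<lambda>a. (node a, E)) \<union> range split_pair)"
    by (intro has_sum_Un_disjoint) (auto simp: split_pair_def)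
  moreover have "range (Pair E) \<union> range (\<lambda>a. (node a, E)) \<union> range split_pair = UNIV"
  proof -
    have "p \<in> range (Pair E) \<union> range (\<lambda>a. (node a, E)) \<union> range split_pair" for p
    proof (cases p)
      case (Pair a b)
      then show ?thesis
      proof (cases a; cases b)
        fix a1 a2 b1 b2
        assume "a = N a1 a2" "b = N b1 b2"
        then have "p = split_pair ((a1, b2), (a2, b1))"
          by (simp add: Pair split_pair_def)
        then show ?thesis
          by blast
      qed (auto simp: Pair image_iff)
    qed
    then show ?thesis
      by auto
  qed
  ultimately show ?thesis
    by (simp only:)
qed

lemma pair_gf_equation:
  assumes small: "max 1 \<bar>t\<bar> * \<bar>x\<bar> \<le> 1/4"
  shows "pair_gf t x = 2 * catalan_gf (t * x) - 1 + x\<^sup>2 * (pair_gf t x)\<^sup>2"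
proof -
  note tx = abs_le_one_quarter(2)[OF small]
  note abs = pair_weight_abs_summable[OF small]
  have "((\<lambda>(p, q). x\<^sup>2 * (pair_weight t x p * pair_weight t x q)) has_sum
      x\<^sup>2 * (pair_gf t x)\<^sup>2) UNIV"
    using has_sum_cmult_right[OF has_sum_cartesian_product[OF abs abs], of "x\<^sup>2"]
    by (simp add: pair_gf_def case_prod_unfold power2_eq_square)
  moreover have "(\<lambda>((a1, b2), (a2, b1)). pair_weight t x (N a1 a2, N b1 b2)) =
      (\<lambda>(p, q). x\<^sup>2 * (pair_weight t x p * pair_weight t x q))"
    by (simp add: fun_eq_iff pair_weight_N_N)
  ultimately have "((\<lambda>((a1, b2), (a2, b1)). pair_weight t x (N a1 a2, N b1 b2)) has_sum
      x\<^sup>2 * (pair_gf t x)\<^sup>2) UNIV"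
    by (simp only:)
  then have "(pair_weight t x has_sum catalan_gf (t * x) + (catalan_gf (t * x) - 1) +
      x\<^sup>2 * (pair_gf t x)\<^sup>2) UNIV"
    using has_sum_catalan_gf[OF tx] has_sum_catalan_gf_nonempty[OF tx]
    by (intro has_sum_btree_pairsI) (simp_all only: pair_weight_E_left pair_weight_E_right)
  moreover have "(pair_weight t x has_sum pair_gf t x) UNIV"
    using abs by (simp add: pair_gf_def abs_summable_summable)
  ultimately have "catalan_gf (t * x) + (catalan_gf (t * x) - 1) + x\<^sup>2 * (pair_gf t x)\<^sup>2 =
      pair_gf t x"
    by (rule has_sum_unique)
  then show ?thesis
    by simp
qed

lemma has_sum_da_weights:
  assumes "max 1 \<bar>t\<bar> * \<bar>x\<bar> \<le> 1/4"
  shows "((\<lambda>T. t ^ da T * x ^ nnodes T) has_sum 1 + x * pair_gf t x) UNIV"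
proof -
  have "((\<lambda>p. x * pair_weight t x p) has_sum x * pair_gf t x) UNIV"
    using pair_weight_abs_summable[OF assms]
    by (intro has_sum_cmult_right) (simp add: pair_gf_def abs_summable_summable)
  moreover have "(\<lambda>q. t ^ da (node q) * x ^ nnodes (node q)) = (\<lambda>p. x * pair_weight t x p)"
    by (auto simp: da_N pair_weight_def)
  ultimately have "((\<lambda>q. t ^ da (node q) * x ^ nnodes (node q)) has_sum x * pair_gf t x) UNIV"
    by (simp only:)
  then show ?thesis
    by (simp add: has_sum_btree_iff)
qed

lemma sqrt_discriminant_eq:
  fixes a c z :: real
  assumes root: "z = c + a * z\<^sup>2" and small: "\<bar>a\<bar> * \<bar>z\<bar> \<le> 1/2"
  shows "sqrt (1 - 4 * a * c) = 1 - 2 * a * z"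
proof (rule real_sqrt_unique)
  have "(1 - 2 * a * z)\<^sup>2 = 1 - 4 * a * (z - a * z\<^sup>2)"
    by (simp add: power2_eq_square algebra_simps)
  then show "(1 - 2 * a * z)\<^sup>2 = 1 - 4 * a * c"
    using root by simp
  have "a * z \<le> \<bar>a\<bar> * \<bar>z\<bar>"
    by (simp flip: abs_mult)
  then show "0 \<le> 1 - 2 * a * z"
    using small by linarith
qed

lemma catalan_gf_sqrt:
  fixes y :: real
  assumes "\<bar>y\<bar> \<le> 1/4"
  shows "sqrt (1 - 4 * y) = 1 - 2 * y * catalan_gf y"
proof -
  have "\<bar>y\<bar> * \<bar>catalan_gf y\<bar> \<le> 1/4 * 2"
    using assms abs_catalan_gf_le[OF assms] by (intro mult_mono) auto
  then show ?thesis
    using sqrt_discriminant_eq[of "catalan_gf y" 1 y] catalan_gf_equation[OF assms] by simp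
qed

lemma pair_gf_sqrt:
  assumes small: "max 1 \<bar>t\<bar> * \<bar>x\<bar> \<le> 1/4"
  shows "sqrt (1 - 4 * x\<^sup>2 * (2 * catalan_gf (t * x) - 1)) = 1 - 2 * x\<^sup>2 * pair_gf t x"
proof -
  have "x\<^sup>2 \<le> (1/4)\<^sup>2"
    using abs_le_one_quarter(1)[OF small] by (metis abs_ge_zero power2_abs power_mono)
  then have "\<bar>x\<^sup>2\<bar> * \<bar>pair_gf t x\<bar> \<le> (1/4)\<^sup>2 * 4"
    using abs_pair_gf_le[OF small] by (intro mult_mono) auto
  then show ?thesis
    by (intro sqrt_discriminant_eq pair_gf_equation[OF small]) (simp add: power2_eq_square)
qed

theorem theorem4p1:
  fixes t :: real
  assumes "t \<noteq> 0"
  shows "\<exists>r>0. \<forall>x::real. \<bar>x\<bar> < r \<longrightarrow>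
    ((\<lambda>T. t ^ da T * x ^ nnodes T) has_sum
      (1 + (1 - sqrt (1 + 4 * x * (x - (1 - sqrt (1 - 4 * t * x)) / t))) / (2 * x))) UNIV"
proof (intro exI[of _ "1 / (4 * max 1 \<bar>t\<bar>)"] conjI allI impI)
  fix x :: real
  assume "\<bar>x\<bar> < 1 / (4 * max 1 \<bar>t\<bar>)"
  then have small: "max 1 \<bar>t\<bar> * \<bar>x\<bar> \<le> 1/4"
    by (simp add: field_simps)
  define G F where "G = catalan_gf (t * x)" and "F = pair_gf t x"
  have "(1 - sqrt (1 - 4 * t * x)) / t = 2 * x * G"
    using catalan_gf_sqrt[OF abs_le_one_quarter(2)[OF small]] \<open>t \<noteq> 0\<close>
    by (simp add: G_def field_simps)
  then have "1 + 4 * x * (x - (1 - sqrt (1 - 4 * t * x)) / t) = 1 - 4 * x\<^sup>2 * (2 * G - 1)"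
    by (simp add: power2_eq_square algebra_simps)
  then have "1 + (1 - sqrt (1 + 4 * x * (x - (1 - sqrt (1 - 4 * t * x)) / t))) / (2 * x) =
      1 + (1 - (1 - 2 * x\<^sup>2 * F)) / (2 * x)"
    by (simp only: pair_gf_sqrt[OF small, folded G_def F_def])
  also have "\<dots> = 1 + x * F"
    by (cases "x = 0") (simp_all add: power2_eq_square)
  finally show "((\<lambda>T. t ^ da T * x ^ nnodes T) has_sum
      (1 + (1 - sqrt (1 + 4 * x * (x - (1 - sqrt (1 - 4 * t * x)) / t))) / (2 * x))) UNIV"
    using has_sum_da_weights[OF small] by (simp add: F_def)
qed simp

end
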